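(* Let $r\ge 1$ and let $f:\{0,1\}^r\to\{0,1\}$ be any Boolean function. Then $f$ can be performed deterministically in non-adaptive measurement-based quantum computing (nMBQC) using at most $n=2^r-1$ parties; that is, for some $n\le 2^r-1$ there exist an $n\times r$ binary matrix $P$ with no all-zero row, an $n$-partite quantum state and, for each party, a pair of two-outcome measurements, such that for every $\mathbf{x}\in\{0,1\}^r$ the outcomes satisfy $\bigoplus_{j=1}^n m_j=f(\mathbf{x})$ with probability $1$.
   Context: nMBQC: $n$ non-communicating parties share a quantum state $\rho$ on $\mathcal{H}_1\otimes\cdots\otimes\mathcal{H}_n$. A classical control computer receives $\mathbf{x}\in\{0,1\}^r$ and, using only XOR (mod-2 addition) operations, computes $\mathbf{s}=(P\mathbf{x})\bmod 2$ for a fixed $n\times r$ binary matrix $P$ with no all-zero row, sending $s_j\in\{0,1\}$ to party $j$. Party $j$ performs one of two two-outcome measurements (POVMs $\{E^{(j)}_{0|s_j},E^{(j)}_{1|s_j}\}$) chosen by $s_j$, in a single round, obtaining $m_j\in\{0,1\}$ with joint probability $\mathrm{Tr}[\rho\bigotimes_j E^{(j)}_{m_j|s_j}]$. The control computer outputs $\bigoplus_j m_j$ (sum mod 2). A Boolean function $f$ is performed deterministically if for every $\mathbf{x}$ the output equals $f(\mathbf{x})$ with probability $1$. *)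

theory Defs
  imports Complex_Main "HOL-Library.FuncSet"
begin

text \<open>Party j has Hilbert space C^(d j);
  basis indices of the joint space H_1 (x) ... (x) H_n are tuples
  i \<in> PiE {..<n} (\<lambda>j. {..<d j}). Operators are given by their matrix entries.\<close>

definition idx_set :: "nat \<Rightarrow> (nat \<Rightarrow> nat) \<Rightarrow> (nat \<Rightarrow> nat) set" where
  "idx_set n d = PiE {..<n} (\<lambda>j. {..<d j})"

definition psd_on :: "'i set \<Rightarrow> ('i \<Rightarrow> 'i \<Rightarrow> complex) \<Rightarrow> bool" where
  "psd_on S A \<longleftrightarrow> (\<forall>v :: 'i \<Rightarrow> complex.
     (\<Sum>i\<in>S. \<Sum>k\<in>S. cnj (v i) * A i k * v k) \<in> \<real> \<and>
     0 \<le> Re (\<Sum>i\<in>S. \<Sum>k\<in>S. cnj (v i) * A i k * v k))"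

definition density_on :: "'i set \<Rightarrow> ('i \<Rightarrow> 'i \<Rightarrow> complex) \<Rightarrow> bool" where
  "density_on S \<rho> \<longleftrightarrow> psd_on S \<rho> \<and> (\<Sum>i\<in>S. \<rho> i i) = 1"

definition povm2 :: "nat \<Rightarrow> (bool \<Rightarrow> nat \<Rightarrow> nat \<Rightarrow> complex) \<Rightarrow> bool" where
  "povm2 d E \<longleftrightarrow> psd_on {..<d} (E False) \<and> psd_on {..<d} (E True) \<and>
     (\<forall>a<d. \<forall>b<d. E False a b + E True a b = (if a = b then 1 else 0))"

text \<open>Joint outcome probability Tr[rho (E^(1)_{m_1|s_1} (x) ... (x) E^(n)_{m_n|s_n})].
  E j s m is the effect of party j for setting s and outcome m.\<close>
definition joint_prob ::
  "nat \<Rightarrow> (nat \<Rightarrow> nat) \<Rightarrow> ((nat \<Rightarrow> nat) \<Rightarrow> (nat \<Rightarrow> nat) \<Rightarrow> complex)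
   \<Rightarrow> (nat \<Rightarrow> bool \<Rightarrow> bool \<Rightarrow> nat \<Rightarrow> nat \<Rightarrow> complex)
   \<Rightarrow> (nat \<Rightarrow> bool) \<Rightarrow> (nat \<Rightarrow> bool) \<Rightarrow> complex" where
  "joint_prob n d \<rho> E s m =
     (\<Sum>i\<in>idx_set n d. \<Sum>k\<in>idx_set n d. \<rho> i k * (\<Prod>j<n. E j (s j) (m j) (k j) (i j)))"

definition ctrl_input :: "nat \<Rightarrow> (nat \<Rightarrow> nat \<Rightarrow> bool) \<Rightarrow> bool list \<Rightarrow> nat \<Rightarrow> bool" where
  "ctrl_input r P x j = odd (card {k. k < r \<and> P j k \<and> x ! k})"

definition parity :: "nat \<Rightarrow> (nat \<Rightarrow> bool) \<Rightarrow> bool" where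
  "parity n m = odd (card {j. j < n \<and> m j})"

definition performs_det ::
  "nat \<Rightarrow> nat \<Rightarrow> (nat \<Rightarrow> nat) \<Rightarrow> (nat \<Rightarrow> nat \<Rightarrow> bool)
   \<Rightarrow> ((nat \<Rightarrow> nat) \<Rightarrow> (nat \<Rightarrow> nat) \<Rightarrow> complex)
   \<Rightarrow> (nat \<Rightarrow> bool \<Rightarrow> bool \<Rightarrow> nat \<Rightarrow> nat \<Rightarrow> complex)
   \<Rightarrow> (bool list \<Rightarrow> bool) \<Rightarrow> bool" where
  "performs_det r n d P \<rho> E f \<longleftrightarrow>
     (\<forall>x. length x = r \<longrightarrow>
        (\<Sum>m\<in>{m \<in> PiE {..<n} (\<lambda>_. UNIV). parity n m = f x}.
            joint_prob n d \<rho> E (ctrl_input r P x) m) = 1)"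

end

theory Submission
  imports Defs
begin

text \<open>Every real function on {0,1}^r is an affine combination of the linear parities
  x \<mapsto> a.x mod 2 of the 2^r - 1 nonzero masks a: their span contains the coordinate
  functions and is closed under products, because p q = (p + q - (p xor q)) / 2 for bits p, q.
  One party is assigned to each nonzero mask a and receives a.x mod 2. The parties share an
  n-qubit GHZ state and measure in the X-Y plane at angles pi times the coefficients of the
  expansion of f (one party adds pi f(0,...,0)). The outcome parity of such measurements is
  0 with probability (1 + cos \<Sigma> angles) / 2, and here the angles add up to pi f(x).\<close>

definition mask_parity :: "nat \<Rightarrow> nat \<Rightarrow> bool list \<Rightarrow> bool" where
  "mask_parity r a x \<longleftrightarrow> odd (card {k. k < r \<and> bit a k \<and> x ! k})"

definition parity_span :: "nat \<Rightarrow> (bool list \<Rightarrow> real) set" where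
  "parity_span r = {g. \<exists>c0 c. \<forall>x. length x = r \<longrightarrow>
     g x = c0 + (\<Sum>a<2^r. c a * of_bool (mask_parity r a x))}"

lemma parity_span_cong:
  "g \<in> parity_span r \<Longrightarrow> (\<And>x. length x = r \<Longrightarrow> g x = h x) \<Longrightarrow> h \<in> parity_span r"
  unfolding parity_span_def by fastforce

lemma parity_span_const: "(\<lambda>_. c) \<in> parity_span r"
  unfolding parity_span_def by (auto intro!: exI[of _ c] exI[of _ "\<lambda>_. 0"])

lemma mask_parity_take_bit: "mask_parity r (take_bit r a) = mask_parity r a"
  unfolding mask_parity_def by (auto simp: bit_take_bit_iff intro!: arg_cong[where f = card])

lemma parity_span_mask_parity: "(\<lambda>x. of_bool (mask_parity r a x)) \<in> parity_span r"
proof -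
  let ?a = "take_bit r a"
  have "?a < 2^r" by (simp add: take_bit_eq_mod)
  then have "(\<lambda>x. of_bool (mask_parity r ?a x)) \<in> parity_span r"
    unfolding parity_span_def
    by (auto intro!: exI[of _ 0] exI[of _ "\<lambda>b. of_bool (b = ?a)"]
        simp: if_distrib[where f = "\<lambda>c. c * _"] cong: if_cong)
  then show ?thesis by (simp add: mask_parity_take_bit)
qed

lemma parity_span_add:
  assumes "g \<in> parity_span r" "h \<in> parity_span r"
  shows "(\<lambda>x. g x + h x) \<in> parity_span r"
proof -
  from assms obtain c0 c d0 d where
    "\<forall>x. length x = r \<longrightarrow> g x = c0 + (\<Sum>a<2^r. c a * of_bool (mask_parity r a x))"
    "\<forall>x. length x = r \<longrightarrow> h x = d0 + (\<Sum>a<2^r. d a * of_bool (mask_parity r a x))"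
    unfolding parity_span_def by blast
  then show ?thesis
    unfolding parity_span_def
    by (auto intro!: exI[of _ "c0 + d0"] exI[of _ "\<lambda>a. c a + d a"]
        simp: sum.distrib distrib_right)
qed

lemma parity_span_scale:
  assumes "g \<in> parity_span r"
  shows "(\<lambda>x. k * g x) \<in> parity_span r"
proof -
  from assms obtain c0 c where
    "\<forall>x. length x = r \<longrightarrow> g x = c0 + (\<Sum>a<2^r. c a * of_bool (mask_parity r a x))"
    unfolding parity_span_def by blast
  then show ?thesis
    unfolding parity_span_def
    by (auto intro!: exI[of _ "k * c0"] exI[of _ "\<lambda>a. k * c a"]
        simp: sum_distrib_left distrib_left mult.assoc)
qed

lemma parity_span_sum:
  "finite A \<Longrightarrow> (\<And>i. i \<in> A \<Longrightarrow> F i \<in> parity_span r) \<Longrightarrow> (\<lambda>x. \<Sum>i\<in>A. F i x) \<in> parity_span r"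
  by (induction A rule: finite_induct) (auto intro: parity_span_add parity_span_const[of 0, simplified])

lemma odd_card_sym_diff:
  assumes "finite A" "finite B"
  shows "odd (card ((A - B) \<union> (B - A))) \<longleftrightarrow> odd (card A) \<noteq> odd (card B)"
proof -
  have "card A = card (A - B) + card (A \<inter> B)" "card B = card (B - A) + card (A \<inter> B)"
    using assms by (simp_all add: card_Diff_subset_Int inf_commute card_mono)
  moreover have "card ((A - B) \<union> (B - A)) = card (A - B) + card (B - A)"
    using assms by (intro card_Un_disjoint) auto
  ultimately show ?thesis by presburger
qed

lemma mask_parity_xor:
  "mask_parity r (xor a b) x \<longleftrightarrow> mask_parity r a x \<noteq> mask_parity r b x"
proof -
  let ?A = "{k. k < r \<and> bit a k \<and> x ! k}" and ?B = "{k. k < r \<and> bit b k \<and> x ! k}"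
  have "{k. k < r \<and> bit (xor a b) k \<and> x ! k} = (?A - ?B) \<union> (?B - ?A)"
    by (auto simp: bit_xor_iff)
  then show ?thesis
    unfolding mask_parity_def using odd_card_sym_diff[of ?A ?B] by simp
qed

lemma mask_parity_mult:
  "of_bool (mask_parity r a x) * of_bool (mask_parity r b x) =
   (1/2 :: real) * of_bool (mask_parity r a x) + 1/2 * of_bool (mask_parity r b x)
   + -1/2 * of_bool (mask_parity r (xor a b) x)"
  by (auto simp: mask_parity_xor)

lemma parity_span_mult_mask_parity:
  assumes "h \<in> parity_span r"
  shows "(\<lambda>x. of_bool (mask_parity r a x) * h x) \<in> parity_span r"
proof -
  from assms obtain d0 d where h:
    "\<And>x. length x = r \<Longrightarrow> h x = d0 + (\<Sum>b<2^r. d b * of_bool (mask_parity r b x))"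
    unfolding parity_span_def by blast
  let ?p = "\<lambda>a x. of_bool (mask_parity r a x) :: real"
  have "(\<lambda>x. d0 * ?p a x + (\<Sum>b<2^r. d b * ((1/2) * ?p a x + (1/2) * ?p b x
      + (-1/2) * ?p (xor a b) x))) \<in> parity_span r"
    by (intro parity_span_add parity_span_scale parity_span_sum parity_span_mask_parity finite_lessThan)
  then show ?thesis
  proof (rule parity_span_cong)
    fix x :: "bool list"
    assume "length x = r"
    then have "?p a x * h x = d0 * ?p a x + (\<Sum>b<2^r. d b * (?p a x * ?p b x))"
      by (simp add: h distrib_left sum_distrib_left mult_ac)
    then show "d0 * ?p a x + (\<Sum>b<2^r. d b * ((1/2) * ?p a x + (1/2) * ?p b x
      + (-1/2) * ?p (xor a b) x)) = ?p a x * h x"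
      by (simp only: mask_parity_mult)
  qed
qed

lemma parity_span_mult:
  assumes "g \<in> parity_span r" "h \<in> parity_span r"
  shows "(\<lambda>x. g x * h x) \<in> parity_span r"
proof -
  from assms(1) obtain c0 c where g:
    "\<And>x. length x = r \<Longrightarrow> g x = c0 + (\<Sum>a<2^r. c a * of_bool (mask_parity r a x))"
    unfolding parity_span_def by blast
  have "(\<lambda>x. c0 * h x + (\<Sum>a<2^r. c a * (of_bool (mask_parity r a x) * h x))) \<in> parity_span r"
    using assms(2)
    by (intro parity_span_add parity_span_scale parity_span_sum parity_span_mult_mask_parity
        finite_lessThan)
  then show ?thesis
    by (rule parity_span_cong) (simp only: g distrib_right sum_distrib_right mult.assoc)
qed

lemma parity_span_prod:
  "finite A \<Longrightarrow> (\<And>i. i \<in> A \<Longrightarrow> F i \<in> parity_span r) \<Longrightarrow> (\<lambda>x. \<Prod>i\<in>A. F i x) \<in> parity_span r"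
  by (induction A rule: finite_induct) (auto intro: parity_span_mult parity_span_const[of 1, simplified])

lemma mask_parity_exp: "k < r \<Longrightarrow> mask_parity r (2^k) x \<longleftrightarrow> x ! k"
proof -
  assume "k < r"
  then have "{l. l < r \<and> bit ((2::nat)^k) l \<and> x ! l} = (if x ! k then {k} else {})"
    by (auto simp: bit_exp_iff)
  then show ?thesis
    unfolding mask_parity_def by simp
qed

lemma in_parity_span: "g \<in> parity_span r"
proof -
  let ?X = "{y :: bool list. length y = r}"
  have "finite ?X"
    using finite_lists_length_eq[of "UNIV :: bool set" r] by simp
  have coordinate_test: "(\<lambda>x. of_bool (x ! k = y ! k)) \<in> parity_span r" if "k < r" for y k
  proof -
    have "(\<lambda>x. (if y ! k then 1 else -1) * of_bool (mask_parity r (2^k) x)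
        + of_bool (\<not> y ! k)) \<in> parity_span r"
      by (intro parity_span_add parity_span_scale parity_span_mask_parity parity_span_const)
    then show ?thesis
      by (rule parity_span_cong) (use that in \<open>auto simp: mask_parity_exp\<close>)
  qed
  have "(\<lambda>x. \<Sum>y\<in>?X. g y * (\<Prod>k<r. of_bool (x ! k = y ! k))) \<in> parity_span r"
    using \<open>finite ?X\<close> by (intro parity_span_sum parity_span_scale parity_span_prod coordinate_test) auto
  then show ?thesis
  proof (rule parity_span_cong)
    fix x :: "bool list"
    assume x: "length x = r"
    have "(\<Prod>k<r. of_bool (x ! k = y ! k) :: real) = of_bool (y = x)" if "y \<in> ?X" for y
      using that x by (auto intro: nth_equalityI)
    then have "(\<Sum>y\<in>?X. g y * (\<Prod>k<r. of_bool (x ! k = y ! k)))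
        = (\<Sum>y\<in>?X. if y = x then g y else 0)"
      by (intro sum.cong) auto
    also have "\<dots> = g x"
      using \<open>finite ?X\<close> x by simp
    finally show "(\<Sum>y\<in>?X. g y * (\<Prod>k<r. of_bool (x ! k = y ! k))) = g x" .
  qed
qed

lemma parity_expansion:
  fixes g :: "bool list \<Rightarrow> real"
  shows "\<exists>c. \<forall>x. length x = r \<longrightarrow>
     g x = g (replicate r False) + (\<Sum>j<2^r - 1. c j * of_bool (mask_parity r (Suc j) x))"
proof -
  obtain c0 c where g:
    "\<And>x. length x = r \<Longrightarrow> g x = c0 + (\<Sum>a<2^r. c a * of_bool (mask_parity r a x))"
    using in_parity_span[of g r] unfolding parity_span_def by blast
  define N :: nat where "N = 2^r - 1"
  have "2^r = Suc N"
    by (simp add: N_def)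
  moreover have "\<not> mask_parity r 0 x" for x
    by (simp add: mask_parity_def)
  ultimately have shift: "(\<Sum>a<2^r. c a * of_bool (mask_parity r a x))
      = (\<Sum>j<N. c (Suc j) * of_bool (mask_parity r (Suc j) x))" for x
    by (simp only: sum.lessThan_Suc_shift) simp
  have "g (replicate r False) = c0"
    using g[of "replicate r False"] by (simp add: mask_parity_def cong: conj_cong)
  then show ?thesis
    using g shift unfolding N_def by (intro exI[of _ "\<lambda>j. c (Suc j)"]) auto
qed

lemma psd_on_outer: "psd_on S (\<lambda>i k. w i * cnj (w k))"
proof -
  have "(\<Sum>i\<in>S. \<Sum>k\<in>S. cnj (v i) * (w i * cnj (w k)) * v k) = of_real ((norm W)\<^sup>2)"
    if "W = (\<Sum>k\<in>S. cnj (w k) * v k)" for v W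
  proof -
    have "(\<Sum>i\<in>S. \<Sum>k\<in>S. cnj (v i) * (w i * cnj (w k)) * v k)
        = (\<Sum>i\<in>S. cnj (v i) * w i) * (\<Sum>k\<in>S. cnj (w k) * v k)"
      by (simp add: sum_product mult.assoc)
    also have "\<dots> = cnj W * W"
      unfolding that cnj_sum by (simp add: mult.commute)
    also have "\<dots> = of_real ((norm W)\<^sup>2)"
      by (subst complex_norm_square) (rule mult.commute)
    finally show ?thesis .
  qed
  then show ?thesis
    unfolding psd_on_def by auto
qed

lemma psd_on_scale:
  assumes "0 \<le> c" "psd_on S A"
  shows "psd_on S (\<lambda>i k. of_real c * A i k)"
proof -
  have "(\<Sum>i\<in>S. \<Sum>k\<in>S. cnj (v i) * (of_real c * A i k) * v k)
      = of_real c * (\<Sum>i\<in>S. \<Sum>k\<in>S. cnj (v i) * A i k * v k)" for v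
    by (simp add: sum_distrib_left mult_ac)
  then show ?thesis
    using assms unfolding psd_on_def by (simp add: Reals_mult)
qed

definition const_index :: "nat \<Rightarrow> nat \<Rightarrow> nat \<Rightarrow> nat" where
  "const_index n a = restrict (\<lambda>_. a) {..<n}"

definition ghz_vec :: "nat \<Rightarrow> (nat \<Rightarrow> nat) \<Rightarrow> complex" where
  "ghz_vec n i = (if i = const_index n 0 \<or> i = const_index n 1 then of_real (1 / sqrt 2) else 0)"

definition ghz_state :: "nat \<Rightarrow> (nat \<Rightarrow> nat) \<Rightarrow> (nat \<Rightarrow> nat) \<Rightarrow> complex" where
  "ghz_state n i k = ghz_vec n i * cnj (ghz_vec n k)"

lemma cnj_ghz_vec [simp]: "cnj (ghz_vec n i) = ghz_vec n i"
  unfolding ghz_vec_def by simp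

text \<open>equatorial_effect t m is the projector onto (|0> + (-1)^m e^(it) |1>) / sqrt 2, i.e. outcome m
  of a measurement in the X-Y plane of the Bloch sphere at angle t.\<close>
definition equatorial_vec :: "real \<Rightarrow> bool \<Rightarrow> nat \<Rightarrow> complex" where
  "equatorial_vec t m a = (if a = 0 then 1 else (if m then -1 else 1) * cis t)"

definition equatorial_effect :: "real \<Rightarrow> bool \<Rightarrow> nat \<Rightarrow> nat \<Rightarrow> complex" where
  "equatorial_effect t m a b = of_real (1/2) * (equatorial_vec t m a * cnj (equatorial_vec t m b))"

lemma equatorial_vec_0 [simp]: "equatorial_vec t m 0 = 1"
  by (simp add: equatorial_vec_def)

lemma equatorial_vec_mult_cnj: "equatorial_vec t m a * cnj (equatorial_vec t m a) = 1"
  unfolding equatorial_vec_def by (auto simp: cis_cnj cis_mult)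

lemma const_index_in_idx_set: "a < d \<Longrightarrow> const_index n a \<in> idx_set n (\<lambda>_. d)"
  unfolding idx_set_def const_index_def by auto

lemma const_index_inj: "n \<ge> 1 \<Longrightarrow> const_index n a = const_index n b \<longleftrightarrow> a = b"
  unfolding const_index_def by (metis lessThan_iff less_le_trans restrict_apply' zero_less_one)

lemma sum_ghz_vec:
  assumes "n \<ge> 1"
  shows "(\<Sum>i\<in>idx_set n (\<lambda>_. 2). ghz_vec n i * F i)
    = of_real (1 / sqrt 2) * (F (const_index n 0) + F (const_index n 1))"
proof -
  have "finite (idx_set n (\<lambda>_. 2))"
    unfolding idx_set_def by (intro finite_PiE) auto
  then have "(\<Sum>i\<in>idx_set n (\<lambda>_. 2). ghz_vec n i * F i)
      = (\<Sum>i\<in>{const_index n 0, const_index n 1}. ghz_vec n i * F i)"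
    by (intro sum.mono_neutral_right) (auto simp: const_index_in_idx_set ghz_vec_def)
  also have "\<dots> = of_real (1 / sqrt 2) * (F (const_index n 0) + F (const_index n 1))"
    using assms by (simp add: ghz_vec_def const_index_inj distrib_left)
  finally show ?thesis .
qed

lemma density_ghz_state:
  assumes "n \<ge> 1"
  shows "density_on (idx_set n (\<lambda>_. 2)) (ghz_state n)"
proof -
  have "(1 / sqrt 2) * (1 / sqrt 2 + 1 / sqrt 2) = (1 :: real)"
    by (simp add: field_simps)
  then have "(\<Sum>i\<in>idx_set n (\<lambda>_. 2). ghz_vec n i * cnj (ghz_vec n i)) = 1"
    unfolding sum_ghz_vec[OF assms] by (simp add: ghz_vec_def flip: of_real_add of_real_mult)
  then show ?thesis
    unfolding density_on_def ghz_state_def using psd_on_outer[of _ "ghz_vec n"] by simp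
qed

lemma povm2_equatorial_effect: "povm2 2 (equatorial_effect t)"
  unfolding povm2_def
proof (intro conjI allI impI)
  show "psd_on {..<2} (equatorial_effect t False)" "psd_on {..<2} (equatorial_effect t True)"
    unfolding equatorial_effect_def by (rule psd_on_scale; simp add: psd_on_outer)+
  fix a b :: nat
  assume "a < 2" "b < 2"
  then have "a \<in> {0, 1}" "b \<in> {0, 1}"
    by auto
  then show "equatorial_effect t False a b + equatorial_effect t True a b = (if a = b then 1 else 0)"
    unfolding equatorial_effect_def equatorial_vec_def
    by (auto simp: cis_cnj cis_mult)
qed

lemma parity_Suc: "parity (Suc n) m \<longleftrightarrow> parity n m \<noteq> m n"
proof -
  have "{j. j < Suc n \<and> m j} = {j. j < n \<and> m j} \<union> (if m n then {n} else {})"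
    by (auto simp: less_Suc_eq)
  then have "card {j. j < Suc n \<and> m j} = card {j. j < n \<and> m j} + of_bool (m n)"
    by (auto simp: card_insert_if)
  then show ?thesis
    unfolding parity_def by auto
qed

lemma parity_cong: "(\<And>j. j < n \<Longrightarrow> m j = m' j) \<Longrightarrow> parity n m = parity n m'"
  unfolding parity_def by (metis (mono_tags, lifting) Collect_cong)

lemma prod_equatorial_vec_one:
  "(\<Prod>j<n. equatorial_vec (t j) (m j) 1) = (if parity n m then -1 else 1) * cis (\<Sum>j<n. t j)"
proof (induction n)
  case 0
  show ?case
    by (simp add: parity_def)
next
  case (Suc n)
  then show ?case
    by (auto simp: parity_Suc equatorial_vec_def cis_mult)
qed

text \<open>Only the four corner entries of the GHZ density matrix are nonzero; the diagonal ones
  contribute 1/2^n each, the off-diagonal ones a complex-conjugate pair of phases.\<close>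
lemma joint_prob_ghz_equatorial:
  assumes "n \<ge> 1"
  shows "joint_prob n (\<lambda>_. 2) (ghz_state n) (\<lambda>j s. equatorial_effect (\<theta> j s)) s m
    = of_real ((1 + (if parity n m then -1 else 1) * cos (\<Sum>j<n. \<theta> j (s j))) / 2^n)"
proof -
  let ?Z = "const_index n 0" and ?O = "const_index n 1"
  define G where "G i k = (\<Prod>j<n. equatorial_effect (\<theta> j (s j)) (m j) (k j) (i j))" for i k
  define z where "z = (\<Prod>j<n. equatorial_vec (\<theta> j (s j)) (m j) 1)"
  define c :: complex where "c = of_real (1 / sqrt 2)"
  have "c * c = 1/2"
    unfolding c_def by (simp flip: of_real_mult)
  have "joint_prob n (\<lambda>_. 2) (ghz_state n) (\<lambda>j s. equatorial_effect (\<theta> j s)) s m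
      = (\<Sum>i\<in>idx_set n (\<lambda>_. 2). ghz_vec n i * (\<Sum>k\<in>idx_set n (\<lambda>_. 2). ghz_vec n k * G i k))"
    unfolding joint_prob_def ghz_state_def G_def sum_distrib_left by (simp add: mult.assoc)
  also have "\<dots> = c * (c * (G ?Z ?Z + G ?Z ?O) + c * (G ?O ?Z + G ?O ?O))"
    unfolding sum_ghz_vec[OF assms] c_def ..
  also have "\<dots> = 1/2 * (G ?Z ?Z + G ?O ?O + (G ?Z ?O + G ?O ?Z))"
    by (simp only: distrib_left mult.assoc[symmetric] \<open>c * c = 1/2\<close>) (simp add: algebra_simps)
  finally have jp: "joint_prob n (\<lambda>_. 2) (ghz_state n) (\<lambda>j s. equatorial_effect (\<theta> j s)) s m
      = 1/2 * (G ?Z ?Z + G ?O ?O + (G ?Z ?O + G ?O ?Z))" .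
  have diagonal: "G ?Z ?Z = (1/2)^n" "G ?O ?O = (1/2)^n"
    unfolding G_def const_index_def
    by (simp_all add: equatorial_effect_def equatorial_vec_mult_cnj)
  have "G ?Z ?O = (\<Prod>j<n. 1/2 * equatorial_vec (\<theta> j (s j)) (m j) 1)"
    unfolding G_def const_index_def by (intro prod.cong) (simp_all add: equatorial_effect_def)
  also have "\<dots> = (1/2)^n * z"
    by (simp only: prod.distrib prod_constant card_lessThan z_def)
  moreover have "G ?O ?Z = (\<Prod>j<n. 1/2 * cnj (equatorial_vec (\<theta> j (s j)) (m j) 1))"
    unfolding G_def const_index_def by (intro prod.cong) (simp_all add: equatorial_effect_def)
  moreover have "\<dots> = (1/2)^n * cnj z"
    by (simp only: prod.distrib prod_constant card_lessThan z_def cnj_prod)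
  ultimately have off_diagonal: "G ?Z ?O + G ?O ?Z = (1/2)^n * (z + cnj z)"
    by (simp add: distrib_left)
  have "z + cnj z = of_real (2 * ((if parity n m then -1 else 1) * cos (\<Sum>j<n. \<theta> j (s j))))"
    unfolding complex_add_cnj z_def prod_equatorial_vec_one by simp
  then show ?thesis
    unfolding jp diagonal off_diagonal by (simp add: field_simps)
qed

lemma card_parity_class:
  assumes "n \<ge> 1"
  shows "2 * card {m \<in> Pi\<^sub>E {..<n} (\<lambda>_. UNIV). parity n m = b} = 2 ^ n"
proof -
  let ?M = "Pi\<^sub>E {..<n} (\<lambda>_. UNIV :: bool set)"
  let ?C = "\<lambda>b. {m \<in> ?M. parity n m = b}"
  obtain k where k: "n = Suc k"
    using assms by (cases n) auto
  define flip where "flip m = m(k := \<not> m k)" for m :: "nat \<Rightarrow> bool"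
  have "parity n (flip m) \<longleftrightarrow> \<not> parity n m" for m
    unfolding k flip_def parity_Suc using parity_cong[of k "m(k := \<not> m k)" m] by auto
  moreover have "flip m \<in> ?M" if "m \<in> ?M" for m
    using that k by (auto simp: flip_def PiE_iff extensional_def)
  moreover have "flip (flip m) = m" for m
    by (simp add: flip_def)
  ultimately have "bij_betw flip (?C True) (?C False)"
    by (intro bij_betwI[where g = flip]) auto
  then have "card (?C True) = card (?C False)"
    by (rule bij_betw_same_card)
  moreover have "card ?M = card (?C True) + card (?C False)"
  proof -
    have "card ?M = card (?C True \<union> ?C False)"
      by (rule arg_cong[where f = card]) auto
    also have "\<dots> = card (?C True) + card (?C False)"
      by (rule card_Un_disjoint) (auto simp: finite_PiE)
    finally show ?thesis .
  qed
  moreover have "card ?M = 2 ^ n"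
    by (simp add: card_PiE)
  ultimately show ?thesis
    by (cases b) simp_all
qed

lemma performs_det_ghz_equatorial:
  assumes "n \<ge> 1"
    and phase: "\<And>x. length x = r \<Longrightarrow> (\<Sum>j<n. \<theta> j (ctrl_input r P x j)) = pi * of_bool (f x)"
  shows "performs_det r n (\<lambda>_. 2) P (ghz_state n) (\<lambda>j s. equatorial_effect (\<theta> j s)) f"
  unfolding performs_det_def
proof (intro allI impI)
  fix x :: "bool list"
  assume x: "length x = r"
  let ?C = "{m \<in> Pi\<^sub>E {..<n} (\<lambda>_. UNIV). parity n m = f x}"
  have "joint_prob n (\<lambda>_. 2) (ghz_state n) (\<lambda>j s. equatorial_effect (\<theta> j s)) (ctrl_input r P x) m
      = 2 / 2^n" if "m \<in> ?C" for m
    using that by (simp add: joint_prob_ghz_equatorial[OF assms(1)] phase[OF x])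
  then have "(\<Sum>m\<in>?C. joint_prob n (\<lambda>_. 2) (ghz_state n) (\<lambda>j s. equatorial_effect (\<theta> j s))
      (ctrl_input r P x) m) = of_nat (2 * card ?C) / 2^n"
    by simp
  also have "\<dots> = 1"
    unfolding card_parity_class[OF assms(1)] by simp
  finally show "(\<Sum>m\<in>?C. joint_prob n (\<lambda>_. 2) (ghz_state n) (\<lambda>j s. equatorial_effect (\<theta> j s))
      (ctrl_input r P x) m) = 1" .
qed

lemma ex_bit_less_if_less_exp:
  fixes a :: nat
  assumes "a \<noteq> 0" "a < 2 ^ r"
  shows "\<exists>k<r. bit a k"
proof -
  obtain k where "bit a k"
    using assms(1) bit_eq_iff[of a 0] by auto
  moreover have "take_bit r a = a"
    using assms(2) by (simp add: take_bit_nat_eq_self_iff)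
  ultimately show ?thesis
    by (metis bit_take_bit_iff)
qed

lemma performs_det_of_parity_expansion:
  assumes "n \<ge> 1"
    and expansion: "\<And>x. length x = r \<Longrightarrow>
      of_bool (f x) = of_bool b + (\<Sum>j<n. c j * of_bool (mask_parity r (Suc j) x))"
  shows "performs_det r n (\<lambda>_. 2) (\<lambda>j k. bit (Suc j) k) (ghz_state n)
    (\<lambda>j s. equatorial_effect (pi * of_bool (j = 0 \<and> b) + pi * (c j * of_bool s))) f"
proof (rule performs_det_ghz_equatorial[OF assms(1)])
  fix x :: "bool list"
  assume x: "length x = r"
  have "ctrl_input r (\<lambda>j k. bit (Suc j) k) x = (\<lambda>j. mask_parity r (Suc j) x)"
    unfolding ctrl_input_def mask_parity_def ..
  then have "(\<Sum>j<n. pi * of_bool (j = 0 \<and> b) + pi * (c j * of_bool (ctrl_input r (\<lambda>j k. bit (Suc j) k) x j)))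
      = pi * (\<Sum>j<n. of_bool (j = 0 \<and> b)) + pi * (\<Sum>j<n. c j * of_bool (mask_parity r (Suc j) x))"
    unfolding sum.distrib sum_distrib_left by simp
  also have "(\<Sum>j<n. of_bool (j = 0 \<and> b)) = (of_bool b :: real)"
    using assms(1) by (cases b) auto
  finally show "(\<Sum>j<n. pi * of_bool (j = 0 \<and> b) + pi * (c j * of_bool (ctrl_input r (\<lambda>j k. bit (Suc j) k) x j)))
      = pi * of_bool (f x)"
    by (simp only: expansion[OF x] distrib_left)
qed

theorem theorem3p4p1:
  fixes r :: nat and f :: "bool list \<Rightarrow> bool"
  assumes "r \<ge> 1"
  shows "\<exists>n d P \<rho> E.
     1 \<le> n \<and> n \<le> 2 ^ r - 1 \<and>
     (\<forall>j<n. \<exists>k<r. P j k) \<and>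
     (\<forall>j<n. d j \<ge> 1) \<and>
     density_on (idx_set n d) \<rho> \<and>
     (\<forall>j<n. \<forall>s. povm2 (d j) (E j s)) \<and>
     performs_det r n d P \<rho> E f"
proof -
  define n :: nat where "n = 2 ^ r - 1"
  have "(2::nat) ^ 1 \<le> 2 ^ r"
    using assms by (intro power_increasing) auto
  then have "n \<ge> 1"
    by (simp add: n_def)
  obtain c :: "nat \<Rightarrow> real" where expansion: "\<And>x. length x = r \<Longrightarrow> of_bool (f x)
      = of_bool (f (replicate r False)) + (\<Sum>j<n. c j * of_bool (mask_parity r (Suc j) x))"
    using parity_expansion[where g = "\<lambda>x. of_bool (f x)" and r = r] unfolding n_def by blast
  let ?E = "\<lambda>j s. equatorial_effect (pi * of_bool (j = 0 \<and> f (replicate r False)) + pi * (c j * of_bool s))"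
  from \<open>n \<ge> 1\<close> expansion have "performs_det r n (\<lambda>_. 2) (\<lambda>j k. bit (Suc j) k) (ghz_state n) ?E f"
    by (rule performs_det_of_parity_expansion)
  moreover have "\<forall>j<n. \<exists>k<r. bit (Suc j) k"
    unfolding n_def by (auto intro!: ex_bit_less_if_less_exp)
  ultimately show ?thesis
    using \<open>n \<ge> 1\<close> density_ghz_state povm2_equatorial_effect
    by (intro exI[of _ n] exI[of _ "\<lambda>_. 2"] exI[of _ "\<lambda>j k. bit (Suc j) k"] exI[of _ "ghz_state n"]
        exI[of _ ?E]) (simp add: n_def)
qed

end
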